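(* Let $(\mathcal C,\otimes,I)$ be a symmetric closed monoidal category and $M$ a commutative monad on $\mathcal C$. For each symmetric Eilenberg--Moore $M$-monoid of the shape $\langle MA,\mu_A,m,u\rangle$, let $s=m\circ(\mathrm{id}_{MA}\otimes\eta_A): MA\otimes A\to MA$. Then $\Lambda(s): MA\to(A\Rightarrow MA)$ (i) is a morphism of symmetric Eilenberg--Moore $M$-monoids $\langle MA,\mu_A,m,u\rangle\to\langle A\Rightarrow MA,\ \Lambda(q),\ \mathsf{kcomp},\ \mathsf{kident}\rangle$, and (ii) is a split monomorphism in $\mathcal C$, i.e. there exists $r:(A\Rightarrow MA)\to MA$ with $r\circ\Lambda(s)=\mathrm{id}_{MA}$.
   Context: Symmetry $\mathsf{sym}:X\otimes Y\to Y\otimes X$; structural isomorphisms written $\cong$. Closed: $(-)\otimes B\dashv B\Rightarrow(-)$, currying $\Lambda:\mathcal C(X\otimes B,C)\cong\mathcal C(X,B\Rightarrow C)$, counit $\mathsf{app}$. $M$ has strength $\tau_{X,Y}:MX\otimes Y\to M(X\otimes Y)$ and left strength $\tau'_{X,Y}=M\mathsf{sym}\circ\tau_{Y,X}\circ\mathsf{sym}: X\otimes MY\to M(X\otimes Y)$; commutativity means $\mu\circ M\tau\circ\tau'=\mu\circ M\tau'\circ\tau$. $q=\mu_A\circ M\mathsf{app}\circ\tau: M(A\Rightarrow MA)\otimes A\to MA$. $\mathsf{kcomp}=\Lambda(w):(A\Rightarrow MA)\otimes(A\Rightarrow MA)\to(A\Rightarrow MA)$ where $w=\mu_A\circ M\mathsf{app}\circ\tau'\circ(\mathrm{id}\otimes\mathsf{app})\circ\cong:((A\Rightarrow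 MA)\otimes(A\Rightarrow MA))\otimes A\to MA$, and $\mathsf{kident}=\Lambda(\eta_A\circ\cong): I\to(A\Rightarrow MA)$ with $\cong: I\otimes A\to A$. A symmetric Eilenberg--Moore $M$-monoid is a tuple $\langle E,a: ME\to E,m: E\otimes E\to E,u: I\to E\rangle$ with $\langle E,a\rangle$ an Eilenberg--Moore $M$-algebra, $\langle E,m,u\rangle$ a monoid, and $a\circ Mm\circ\mu_{E\otimes E}\circ M\tau'_{E,E}\circ\tau_{E,ME}=m\circ(a\otimes a)$. A morphism of such is a $\mathcal C$-morphism that is both an $M$-algebra morphism and a monoid morphism. *)

theory Defs
  imports Main
begin

text \<open>A category is given by a set of arrows with domain/codomain maps to a
type of objects, composition (written cmp g f for g after f) and identities.\<close>

record ('o, 'm) smcc =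
  Ob    :: "'o set"
  Ar    :: "'m set"
  dm    :: "'m \<Rightarrow> 'o"
  cd    :: "'m \<Rightarrow> 'o"
  cmp   :: "'m \<Rightarrow> 'm \<Rightarrow> 'm"
  idm   :: "'o \<Rightarrow> 'm"
  tob   :: "'o \<Rightarrow> 'o \<Rightarrow> 'o"
  tar   :: "'m \<Rightarrow> 'm \<Rightarrow> 'm"
  unt   :: "'o"
  assoc :: "'o \<Rightarrow> 'o \<Rightarrow> 'o \<Rightarrow> 'm"
  lunit :: "'o \<Rightarrow> 'm"
  runit :: "'o \<Rightarrow> 'm"
  symm  :: "'o \<Rightarrow> 'o \<Rightarrow> 'm"
  expo  :: "'o \<Rightarrow> 'o \<Rightarrow> 'o"
  appl  :: "'o \<Rightarrow> 'o \<Rightarrow> 'm"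
  curr  :: "'o \<Rightarrow> 'o \<Rightarrow> 'o \<Rightarrow> 'm \<Rightarrow> 'm"

definition hom :: "('o, 'm) smcc \<Rightarrow> 'o \<Rightarrow> 'o \<Rightarrow> 'm set" where
  "hom C X Y = {f \<in> Ar C. dm C f = X \<and> cd C f = Y}"

definition is_iso :: "('o, 'm) smcc \<Rightarrow> 'm \<Rightarrow> 'o \<Rightarrow> 'o \<Rightarrow> bool" where
  "is_iso C f X Y \<longleftrightarrow> f \<in> hom C X Y \<and>
     (\<exists>g \<in> hom C Y X. cmp C g f = idm C X \<and> cmp C f g = idm C Y)"

definition category :: "('o, 'm) smcc \<Rightarrow> bool" where
  "category C \<longleftrightarrow>
     (\<forall>f \<in> Ar C. dm C f \<in> Ob C \<and> cd C f \<in> Ob C) \<and>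
     (\<forall>X \<in> Ob C. idm C X \<in> hom C X X) \<and>
     (\<forall>X \<in> Ob C. \<forall>Y \<in> Ob C. \<forall>Z \<in> Ob C. \<forall>f \<in> hom C X Y. \<forall>g \<in> hom C Y Z.
        cmp C g f \<in> hom C X Z) \<and>
     (\<forall>f \<in> Ar C. cmp C (idm C (cd C f)) f = f \<and> cmp C f (idm C (dm C f)) = f) \<and>
     (\<forall>f \<in> Ar C. \<forall>g \<in> Ar C. \<forall>h \<in> Ar C. cd C f = dm C g \<longrightarrow> cd C g = dm C h \<longrightarrow>
        cmp C h (cmp C g f) = cmp C (cmp C h g) f)"

definition monoidal :: "('o, 'm) smcc \<Rightarrow> bool" where
  "monoidal C \<longleftrightarrow> category C \<and>
     unt C \<in> Ob C \<and>
     (\<forall>X \<in> Ob C. \<forall>Y \<in> Ob C. tob C X Y \<in> Ob C) \<and>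
     \<comment> \<open>tensor is a bifunctor\<close>
     (\<forall>X \<in> Ob C. \<forall>X' \<in> Ob C. \<forall>Y \<in> Ob C. \<forall>Y' \<in> Ob C. \<forall>f \<in> hom C X Y. \<forall>g \<in> hom C X' Y'.
        tar C f g \<in> hom C (tob C X X') (tob C Y Y')) \<and>
     (\<forall>X \<in> Ob C. \<forall>Y \<in> Ob C. tar C (idm C X) (idm C Y) = idm C (tob C X Y)) \<and>
     (\<forall>f \<in> Ar C. \<forall>g \<in> Ar C. \<forall>f' \<in> Ar C. \<forall>g' \<in> Ar C. cd C f = dm C g \<longrightarrow> cd C f' = dm C g' \<longrightarrow>
        tar C (cmp C g f) (cmp C g' f') = cmp C (tar C g g') (tar C f f')) \<and>
     \<comment> \<open>structural isomorphisms\<close>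
     (\<forall>X \<in> Ob C. \<forall>Y \<in> Ob C. \<forall>Z \<in> Ob C.
        is_iso C (assoc C X Y Z) (tob C (tob C X Y) Z) (tob C X (tob C Y Z))) \<and>
     (\<forall>X \<in> Ob C. is_iso C (lunit C X) (tob C (unt C) X) X) \<and>
     (\<forall>X \<in> Ob C. is_iso C (runit C X) (tob C X (unt C)) X) \<and>
     \<comment> \<open>naturality\<close>
     (\<forall>X \<in> Ob C. \<forall>X' \<in> Ob C. \<forall>Y \<in> Ob C. \<forall>Y' \<in> Ob C. \<forall>Z \<in> Ob C. \<forall>Z' \<in> Ob C.
      \<forall>f \<in> hom C X X'. \<forall>g \<in> hom C Y Y'. \<forall>h \<in> hom C Z Z'.
        cmp C (assoc C X' Y' Z') (tar C (tar C f g) h) =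
        cmp C (tar C f (tar C g h)) (assoc C X Y Z)) \<and>
     (\<forall>X \<in> Ob C. \<forall>Y \<in> Ob C. \<forall>f \<in> hom C X Y.
        cmp C (lunit C Y) (tar C (idm C (unt C)) f) = cmp C f (lunit C X) \<and>
        cmp C (runit C Y) (tar C f (idm C (unt C))) = cmp C f (runit C X)) \<and>
     \<comment> \<open>pentagon and triangle\<close>
     (\<forall>W \<in> Ob C. \<forall>X \<in> Ob C. \<forall>Y \<in> Ob C. \<forall>Z \<in> Ob C.
        cmp C (assoc C W X (tob C Y Z)) (assoc C (tob C W X) Y Z) =
        cmp C (tar C (idm C W) (assoc C X Y Z))
          (cmp C (assoc C W (tob C X Y) Z) (tar C (assoc C W X Y) (idm C Z)))) \<and>
     (\<forall>X \<in> Ob C. \<forall>Y \<in> Ob C.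
        cmp C (tar C (idm C X) (lunit C Y)) (assoc C X (unt C) Y) =
        tar C (runit C X) (idm C Y))"

definition symmetric_monoidal :: "('o, 'm) smcc \<Rightarrow> bool" where
  "symmetric_monoidal C \<longleftrightarrow> monoidal C \<and>
     (\<forall>X \<in> Ob C. \<forall>Y \<in> Ob C. symm C X Y \<in> hom C (tob C X Y) (tob C Y X)) \<and>
     (\<forall>X \<in> Ob C. \<forall>X' \<in> Ob C. \<forall>Y \<in> Ob C. \<forall>Y' \<in> Ob C. \<forall>f \<in> hom C X X'. \<forall>g \<in> hom C Y Y'.
        cmp C (symm C X' Y') (tar C f g) = cmp C (tar C g f) (symm C X Y)) \<and>
     (\<forall>X \<in> Ob C. \<forall>Y \<in> Ob C. cmp C (symm C Y X) (symm C X Y) = idm C (tob C X Y)) \<and>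
     (\<forall>X \<in> Ob C. \<forall>Y \<in> Ob C. \<forall>Z \<in> Ob C.
        cmp C (assoc C Y Z X) (cmp C (symm C X (tob C Y Z)) (assoc C X Y Z)) =
        cmp C (tar C (idm C Y) (symm C X Z))
          (cmp C (assoc C Y X Z) (tar C (symm C X Y) (idm C Z))))"

text \<open>Closed: (-) \<otimes> B is left adjoint to B \<Rightarrow> (-), presented by the counit
appl B C : (B \<Rightarrow> C) \<otimes> B \<rightarrow> C and currying curr X B C (a bijection
hom (X \<otimes> B) C \<cong> hom X (B \<Rightarrow> C) inverse to g \<mapsto> appl \<circ> (g \<otimes> id)).\<close>

definition symmetric_closed_monoidal :: "('o, 'm) smcc \<Rightarrow> bool" where
  "symmetric_closed_monoidal C \<longleftrightarrow> symmetric_monoidal C \<and>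
     (\<forall>B \<in> Ob C. \<forall>Z \<in> Ob C. expo C B Z \<in> Ob C \<and>
        appl C B Z \<in> hom C (tob C (expo C B Z) B) Z) \<and>
     (\<forall>X \<in> Ob C. \<forall>B \<in> Ob C. \<forall>Z \<in> Ob C. \<forall>f \<in> hom C (tob C X B) Z.
        curr C X B Z f \<in> hom C X (expo C B Z) \<and>
        cmp C (appl C B Z) (tar C (curr C X B Z f) (idm C B)) = f) \<and>
     (\<forall>X \<in> Ob C. \<forall>B \<in> Ob C. \<forall>Z \<in> Ob C. \<forall>g \<in> hom C X (expo C B Z).
        curr C X B Z (cmp C (appl C B Z) (tar C g (idm C B))) = g)"

record ('o, 'm) smonad =
  Mo  :: "'o \<Rightarrow> 'o"
  Mm  :: "'m \<Rightarrow> 'm"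
  eta :: "'o \<Rightarrow> 'm"
  mu  :: "'o \<Rightarrow> 'm"
  tau :: "'o \<Rightarrow> 'o \<Rightarrow> 'm"

definition monad :: "('o, 'm) smcc \<Rightarrow> ('o, 'm) smonad \<Rightarrow> bool" where
  "monad C M \<longleftrightarrow>
     (\<forall>X \<in> Ob C. Mo M X \<in> Ob C) \<and>
     (\<forall>X \<in> Ob C. \<forall>Y \<in> Ob C. \<forall>f \<in> hom C X Y. Mm M f \<in> hom C (Mo M X) (Mo M Y)) \<and>
     (\<forall>X \<in> Ob C. Mm M (idm C X) = idm C (Mo M X)) \<and>
     (\<forall>f \<in> Ar C. \<forall>g \<in> Ar C. cd C f = dm C g \<longrightarrow> Mm M (cmp C g f) = cmp C (Mm M g) (Mm M f)) \<and>
     (\<forall>X \<in> Ob C. eta M X \<in> hom C X (Mo M X) \<and> mu M X \<in> hom C (Mo M (Mo M X)) (Mo M X)) \<and>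
     (\<forall>X \<in> Ob C. \<forall>Y \<in> Ob C. \<forall>f \<in> hom C X Y.
        cmp C (eta M Y) f = cmp C (Mm M f) (eta M X) \<and>
        cmp C (mu M Y) (Mm M (Mm M f)) = cmp C (Mm M f) (mu M X)) \<and>
     (\<forall>X \<in> Ob C.
        cmp C (mu M X) (Mm M (mu M X)) = cmp C (mu M X) (mu M (Mo M X)) \<and>
        cmp C (mu M X) (eta M (Mo M X)) = idm C (Mo M X) \<and>
        cmp C (mu M X) (Mm M (eta M X)) = idm C (Mo M X))"

definition strong_monad :: "('o, 'm) smcc \<Rightarrow> ('o, 'm) smonad \<Rightarrow> bool" where
  "strong_monad C M \<longleftrightarrow> monad C M \<and>
     (\<forall>X \<in> Ob C. \<forall>Y \<in> Ob C. tau M X Y \<in> hom C (tob C (Mo M X) Y) (Mo M (tob C X Y))) \<and>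
     (\<forall>X \<in> Ob C. \<forall>X' \<in> Ob C. \<forall>Y \<in> Ob C. \<forall>Y' \<in> Ob C. \<forall>f \<in> hom C X X'. \<forall>g \<in> hom C Y Y'.
        cmp C (tau M X' Y') (tar C (Mm M f) g) = cmp C (Mm M (tar C f g)) (tau M X Y)) \<and>
     (\<forall>X \<in> Ob C. cmp C (Mm M (runit C X)) (tau M X (unt C)) = runit C (Mo M X)) \<and>
     (\<forall>X \<in> Ob C. \<forall>Y \<in> Ob C. \<forall>Z \<in> Ob C.
        cmp C (tau M X (tob C Y Z)) (assoc C (Mo M X) Y Z) =
        cmp C (Mm M (assoc C X Y Z)) (cmp C (tau M (tob C X Y) Z) (tar C (tau M X Y) (idm C Z)))) \<and>
     (\<forall>X \<in> Ob C. \<forall>Y \<in> Ob C.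
        cmp C (tau M X Y) (tar C (eta M X) (idm C Y)) = eta M (tob C X Y) \<and>
        cmp C (tau M X Y) (tar C (mu M X) (idm C Y)) =
        cmp C (mu M (tob C X Y)) (cmp C (Mm M (tau M X Y)) (tau M (Mo M X) Y)))"

definition ltau :: "('o, 'm) smcc \<Rightarrow> ('o, 'm) smonad \<Rightarrow> 'o \<Rightarrow> 'o \<Rightarrow> 'm" where
  "ltau C M X Y = cmp C (Mm M (symm C Y X)) (cmp C (tau M Y X) (symm C X (Mo M Y)))"

definition commutative_monad :: "('o, 'm) smcc \<Rightarrow> ('o, 'm) smonad \<Rightarrow> bool" where
  "commutative_monad C M \<longleftrightarrow> strong_monad C M \<and>
     (\<forall>X \<in> Ob C. \<forall>Y \<in> Ob C.
        cmp C (mu M (tob C X Y)) (cmp C (Mm M (tau M X Y)) (ltau C M (Mo M X) Y)) =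
        cmp C (mu M (tob C X Y)) (cmp C (Mm M (ltau C M X Y)) (tau M X (Mo M Y))))"

definition sym_em_monoid ::
  "('o, 'm) smcc \<Rightarrow> ('o, 'm) smonad \<Rightarrow> 'o \<Rightarrow> 'm \<Rightarrow> 'm \<Rightarrow> 'm \<Rightarrow> bool" where
  "sym_em_monoid C M E a m u \<longleftrightarrow>
     E \<in> Ob C \<and>
     \<comment> \<open>Eilenberg--Moore algebra\<close>
     a \<in> hom C (Mo M E) E \<and>
     cmp C a (eta M E) = idm C E \<and>
     cmp C a (Mm M a) = cmp C a (mu M E) \<and>
     \<comment> \<open>monoid\<close>
     m \<in> hom C (tob C E E) E \<and> u \<in> hom C (unt C) E \<and>
     cmp C m (tar C m (idm C E)) = cmp C m (cmp C (tar C (idm C E) m) (assoc C E E E)) \<and>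
     cmp C m (tar C u (idm C E)) = lunit C E \<and>
     cmp C m (tar C (idm C E) u) = runit C E \<and>
     \<comment> \<open>compatibility\<close>
     cmp C a (cmp C (Mm M m) (cmp C (mu M (tob C E E))
        (cmp C (Mm M (ltau C M E E)) (tau M E (Mo M E))))) =
     cmp C m (tar C a a)"

definition sym_em_monoid_hom ::
  "('o, 'm) smcc \<Rightarrow> ('o, 'm) smonad \<Rightarrow> 'o \<Rightarrow> 'm \<Rightarrow> 'm \<Rightarrow> 'm \<Rightarrow>
     'o \<Rightarrow> 'm \<Rightarrow> 'm \<Rightarrow> 'm \<Rightarrow> 'm \<Rightarrow> bool" where
  "sym_em_monoid_hom C M E a m u E' a' m' u' f \<longleftrightarrow>
     sym_em_monoid C M E a m u \<and> sym_em_monoid C M E' a' m' u' \<and>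
     f \<in> hom C E E' \<and>
     cmp C f a = cmp C a' (Mm M f) \<and>
     cmp C f m = cmp C m' (tar C f f) \<and>
     cmp C f u = u'"

abbreviation KA :: "('o, 'm) smcc \<Rightarrow> ('o, 'm) smonad \<Rightarrow> 'o \<Rightarrow> 'o" where
  "KA C M A \<equiv> expo C A (Mo M A)"

definition qmap :: "('o, 'm) smcc \<Rightarrow> ('o, 'm) smonad \<Rightarrow> 'o \<Rightarrow> 'm" where
  "qmap C M A = cmp C (mu M A) (cmp C (Mm M (appl C A (Mo M A))) (tau M (KA C M A) A))"

definition wmap :: "('o, 'm) smcc \<Rightarrow> ('o, 'm) smonad \<Rightarrow> 'o \<Rightarrow> 'm" where
  "wmap C M A = cmp C (mu M A) (cmp C (Mm M (appl C A (Mo M A)))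
     (cmp C (ltau C M (KA C M A) A)
       (cmp C (tar C (idm C (KA C M A)) (appl C A (Mo M A)))
          (assoc C (KA C M A) (KA C M A) A))))"

definition kcomp :: "('o, 'm) smcc \<Rightarrow> ('o, 'm) smonad \<Rightarrow> 'o \<Rightarrow> 'm" where
  "kcomp C M A = curr C (tob C (KA C M A) (KA C M A)) A (Mo M A) (wmap C M A)"

definition kident :: "('o, 'm) smcc \<Rightarrow> ('o, 'm) smonad \<Rightarrow> 'o \<Rightarrow> 'm" where
  "kident C M A = curr C (unt C) A (Mo M A) (cmp C (eta M A) (lunit C A))"

end

theory Submission
  imports Defs
begin

text \<open>
  \<open>\<Lambda>(s)\<close> sends \<open>x\<close> to the Kleisli map \<open>a \<mapsto> m(x, \<eta> a)\<close>. Precomposing the compatibility law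
  of \<open>m\<close> with \<open>\<eta> \<otimes> id\<close> and \<open>id \<otimes> \<eta>\<close> shows that \<open>m\<close> is an \<open>M\<close>-algebra map in each variable
  separately, so the Kleisli extension of \<open>\<Lambda>(s)(x)\<close> is \<open>m(x, -)\<close>, i.e.
  \<open>\<mu> \<circ> M s \<circ> \<tau>' = m\<close>. After uncurrying, every equation saying that \<open>\<Lambda>(s)\<close> preserves the
  algebra and monoid structure, and every law making \<open>A \<Rightarrow> MA\<close> a symmetric Eilenberg--Moore
  monoid, reduces to monoidal coherence and the monad, strength and monoid laws; commutativity
  of \<open>M\<close> is needed only for the compatibility of Kleisli composition with \<open>\<Lambda>(q)\<close>. A retraction
  evaluates the Kleisli extension of a map at the unit \<open>u\<close>, which undoes \<open>\<Lambda>(s)\<close> because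
  \<open>m(x, u) = x\<close>.
\<close>

definition inverse_arr :: "('o, 'm) smcc \<Rightarrow> 'o \<Rightarrow> 'o \<Rightarrow> 'm \<Rightarrow> 'm" where
  "inverse_arr C X Y f = (SOME g. g \<in> hom C Y X \<and> cmp C g f = idm C X \<and> cmp C f g = idm C Y)"

lemma inverse_arr:
  assumes "is_iso C f X Y"
  shows "inverse_arr C X Y f \<in> hom C Y X \<and>
    cmp C (inverse_arr C X Y f) f = idm C X \<and> cmp C f (inverse_arr C X Y f) = idm C Y"
  using assms unfolding is_iso_def inverse_arr_def by (metis (mono_tags, lifting) someI_ex)

locale symmetric_closed_monoidal_category =
  fixes C :: "('o, 'm) smcc"
  assumes symmetric_closed_monoidal: "symmetric_closed_monoidal C"
begin

abbreviation "Arr \<equiv> Ar C"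
abbreviation "Obj \<equiv> Ob C"
abbreviation "src f \<equiv> dm C f"
abbreviation "trg f \<equiv> cd C f"
abbreviation comp (infixr "\<cdot>" 55) where "g \<cdot> f \<equiv> cmp C g f"
abbreviation tensor (infixl "\<otimes>" 65) where "f \<otimes> g \<equiv> tar C f g"
abbreviation tensor_ob (infixl "\<odot>" 65) where "X \<odot> Y \<equiv> tob C X Y"
abbreviation "ide X \<equiv> idm C X"
abbreviation "I \<equiv> unt C"
abbreviation "\<alpha> X Y Z \<equiv> assoc C X Y Z"
abbreviation "\<alpha>' X Y Z \<equiv> inverse_arr C ((X \<odot> Y) \<odot> Z) (X \<odot> (Y \<odot> Z)) (\<alpha> X Y Z)"
abbreviation "\<l> X \<equiv> lunit C X"
abbreviation "\<r> X \<equiv> runit C X"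
abbreviation "\<l>' X \<equiv> inverse_arr C (I \<odot> X) X (\<l> X)"
abbreviation "\<r>' X \<equiv> inverse_arr C (X \<odot> I) X (\<r> X)"
abbreviation "\<sigma> X Y \<equiv> symm C X Y"
abbreviation "ev B Z \<equiv> appl C B Z"
abbreviation "\<Lambda> X B Z f \<equiv> curr C X B Z f"

lemma symmetric_monoidal: "symmetric_monoidal C"
  using symmetric_closed_monoidal unfolding symmetric_closed_monoidal_def by blast
lemma monoidal: "monoidal C"
  using symmetric_monoidal unfolding symmetric_monoidal_def by blast
lemma category: "category C"
  using monoidal unfolding monoidal_def by (elim conjE) simp

lemma src_in_Obj [simp]: "f \<in> Arr \<Longrightarrow> src f \<in> Obj"
  and trg_in_Obj [simp]: "f \<in> Arr \<Longrightarrow> trg f \<in> Obj"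
  using category unfolding category_def by blast+

lemma ide_type [simp]:
  "X \<in> Obj \<Longrightarrow> ide X \<in> Arr" "X \<in> Obj \<Longrightarrow> src (ide X) = X" "X \<in> Obj \<Longrightarrow> trg (ide X) = X"
  using category unfolding category_def hom_def by blast+

lemma comp_type [simp]:
  assumes "f \<in> Arr" "g \<in> Arr" "trg f = src g"
  shows "g \<cdot> f \<in> Arr" "src (g \<cdot> f) = src f" "trg (g \<cdot> f) = trg g"
proof -
  have closed: "\<forall>X \<in> Obj. \<forall>Y \<in> Obj. \<forall>Z \<in> Obj. \<forall>f \<in> hom C X Y. \<forall>g \<in> hom C Y Z. g \<cdot> f \<in> hom C X Z"
    using category unfolding category_def by (elim conjE) assumption
  have "g \<cdot> f \<in> hom C (src f) (trg g)"
    by (rule closed[rule_format, of "src f" "trg f" "trg g"]) (use assms in \<open>auto simp: hom_def\<close>)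
  then show "g \<cdot> f \<in> Arr" "src (g \<cdot> f) = src f" "trg (g \<cdot> f) = trg g"
    by (simp_all add: hom_def)
qed

lemma comp_assoc [simp]:
  "f \<in> Arr \<Longrightarrow> g \<in> Arr \<Longrightarrow> h \<in> Arr \<Longrightarrow> trg f = src g \<Longrightarrow> trg g = src h \<Longrightarrow>
    (h \<cdot> g) \<cdot> f = h \<cdot> (g \<cdot> f)"
  using category unfolding category_def by (elim conjE) simp

lemma comp_ide_arr [simp]: "f \<in> Arr \<Longrightarrow> trg f = Y \<Longrightarrow> ide Y \<cdot> f = f"
  and comp_arr_ide [simp]: "f \<in> Arr \<Longrightarrow> src f = X \<Longrightarrow> f \<cdot> ide X = f"
  using category unfolding category_def by blast+

lemma unit_in_Obj [simp]: "I \<in> Obj"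
  using monoidal unfolding monoidal_def by (elim conjE) simp

lemma tensor_in_Obj [simp]: "X \<in> Obj \<Longrightarrow> Y \<in> Obj \<Longrightarrow> X \<odot> Y \<in> Obj"
  using monoidal unfolding monoidal_def by (elim conjE) simp

lemma tensor_type [simp]:
  assumes "f \<in> Arr" "g \<in> Arr"
  shows "f \<otimes> g \<in> Arr" "src (f \<otimes> g) = src f \<odot> src g" "trg (f \<otimes> g) = trg f \<odot> trg g"
proof -
  have closed: "\<forall>X \<in> Obj. \<forall>X' \<in> Obj. \<forall>Y \<in> Obj. \<forall>Y' \<in> Obj. \<forall>f \<in> hom C X Y. \<forall>g \<in> hom C X' Y'.
      f \<otimes> g \<in> hom C (X \<odot> X') (Y \<odot> Y')"
    using monoidal unfolding monoidal_def by (elim conjE) assumption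
  have "f \<otimes> g \<in> hom C (src f \<odot> src g) (trg f \<odot> trg g)"
    by (rule closed[rule_format, of "src f" "src g" "trg f" "trg g"]) (use assms in \<open>auto simp:
        hom_def\<close>)
  then show "f \<otimes> g \<in> Arr" "src (f \<otimes> g) = src f \<odot> src g" "trg (f \<otimes> g) = trg f \<odot> trg g"
    by (simp_all add: hom_def)
qed

lemma tensor_ide [simp]: "X \<in> Obj \<Longrightarrow> Y \<in> Obj \<Longrightarrow> ide X \<otimes> ide Y = ide (X \<odot> Y)"
  using monoidal unfolding monoidal_def by (elim conjE) simp

lemma interchange:
  "f \<in> Arr \<Longrightarrow> g \<in> Arr \<Longrightarrow> f' \<in> Arr \<Longrightarrow> g' \<in> Arr \<Longrightarrow> trg f = src g \<Longrightarrow> trg f' = src g' \<Longrightarrow>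
    (g \<cdot> f) \<otimes> (g' \<cdot> f') = (g \<otimes> g') \<cdot> (f \<otimes> f')"
  using monoidal unfolding monoidal_def by (elim conjE) simp

lemma whisker_right_comp [simp]:
  "f \<in> Arr \<Longrightarrow> g \<in> Arr \<Longrightarrow> trg f = src g \<Longrightarrow> X \<in> Obj \<Longrightarrow> (g \<cdot> f) \<otimes> ide X = (g \<otimes> ide X) \<cdot> (f \<otimes> ide X)"
  using interchange[of f g "ide X" "ide X"] by simp

lemma whisker_left_comp [simp]:
  "f \<in> Arr \<Longrightarrow> g \<in> Arr \<Longrightarrow> trg f = src g \<Longrightarrow> X \<in> Obj \<Longrightarrow> ide X \<otimes> (g \<cdot> f) = (ide X \<otimes> g) \<cdot> (ide X \<otimes> f)"
  using interchange[of "ide X" "ide X" f g] by simp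

lemma assoc_iso [simp]:
  "X \<in> Obj \<Longrightarrow> Y \<in> Obj \<Longrightarrow> Z \<in> Obj \<Longrightarrow> is_iso C (\<alpha> X Y Z) ((X \<odot> Y) \<odot> Z) (X \<odot> (Y \<odot> Z))"
  using monoidal unfolding monoidal_def by (elim conjE) simp

lemma lunit_iso [simp]: "X \<in> Obj \<Longrightarrow> is_iso C (\<l> X) (I \<odot> X) X"
  using monoidal unfolding monoidal_def by (elim conjE) simp

lemma runit_iso [simp]: "X \<in> Obj \<Longrightarrow> is_iso C (\<r> X) (X \<odot> I) X"
  using monoidal unfolding monoidal_def by (elim conjE) simp

lemma iso_type:
  "is_iso C f X Y \<Longrightarrow> f \<in> Arr" "is_iso C f X Y \<Longrightarrow> src f = X" "is_iso C f X Y \<Longrightarrow> trg f = Y"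
  unfolding is_iso_def hom_def by blast+

lemma assoc_type [simp]:
  "X \<in> Obj \<Longrightarrow> Y \<in> Obj \<Longrightarrow> Z \<in> Obj \<Longrightarrow> \<alpha> X Y Z \<in> Arr"
  "X \<in> Obj \<Longrightarrow> Y \<in> Obj \<Longrightarrow> Z \<in> Obj \<Longrightarrow> src (\<alpha> X Y Z) = (X \<odot> Y) \<odot> Z"
  "X \<in> Obj \<Longrightarrow> Y \<in> Obj \<Longrightarrow> Z \<in> Obj \<Longrightarrow> trg (\<alpha> X Y Z) = X \<odot> (Y \<odot> Z)"
  by (simp_all add: iso_type[OF assoc_iso])

lemma lunit_type [simp]:
  "X \<in> Obj \<Longrightarrow> \<l> X \<in> Arr" "X \<in> Obj \<Longrightarrow> src (\<l> X) = I \<odot> X" "X \<in> Obj \<Longrightarrow> trg (\<l> X) = X"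
  by (simp_all add: iso_type[OF lunit_iso])

lemma runit_type [simp]:
  "X \<in> Obj \<Longrightarrow> \<r> X \<in> Arr" "X \<in> Obj \<Longrightarrow> src (\<r> X) = X \<odot> I" "X \<in> Obj \<Longrightarrow> trg (\<r> X) = X"
  by (simp_all add: iso_type[OF runit_iso])

lemma inverse_arr_type [simp]:
  "is_iso C f X Y \<Longrightarrow> inverse_arr C X Y f \<in> Arr"
  "is_iso C f X Y \<Longrightarrow> src (inverse_arr C X Y f) = Y"
  "is_iso C f X Y \<Longrightarrow> trg (inverse_arr C X Y f) = X"
  by (auto dest: inverse_arr simp: hom_def)

lemma comp_inverse_arr [simp]: "is_iso C f X Y \<Longrightarrow> inverse_arr C X Y f \<cdot> f = ide X"
  and comp_arr_inverse [simp]: "is_iso C f X Y \<Longrightarrow> f \<cdot> inverse_arr C X Y f = ide Y"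
  by (auto dest: inverse_arr)

text \<open>The simplifier keeps composites right-associated; the \<open>comp_reduce\<close> lemmas let an
  equation between composites be applied to a prefix of such a normal form.\<close>

lemma comp_reduce:
  assumes "a \<cdot> b = c" "a \<in> Arr" "b \<in> Arr" "h \<in> Arr" "trg b = src a" "trg h = src b"
  shows "a \<cdot> (b \<cdot> h) = c \<cdot> h"
  using assms by (simp flip: comp_assoc)

lemma comp_reduce3:
  assumes "a \<cdot> (b \<cdot> c) = d" "a \<in> Arr" "b \<in> Arr" "c \<in> Arr" "h \<in> Arr"
    "trg b = src a" "trg c = src b" "trg h = src c"
  shows "a \<cdot> (b \<cdot> (c \<cdot> h)) = d \<cdot> h"
  using assms by (simp flip: comp_assoc)

lemma comp_reduce4:
  assumes "a \<cdot> (b \<cdot> (c \<cdot> d)) = e" "a \<in> Arr" "b \<in> Arr" "c \<in> Arr" "d \<in> Arr" "h \<in> Arr"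
    "trg b = src a" "trg c = src b" "trg d = src c" "trg h = src d"
  shows "a \<cdot> (b \<cdot> (c \<cdot> (d \<cdot> h))) = e \<cdot> h"
  using assms by (simp flip: comp_assoc)

lemma comp_inverse_arr_cancel [simp]:
  "is_iso C f X Y \<Longrightarrow> h \<in> Arr \<Longrightarrow> trg h = X \<Longrightarrow> inverse_arr C X Y f \<cdot> (f \<cdot> h) = h"
  using comp_reduce[OF comp_inverse_arr, of f X Y h] by (simp add: iso_type[of f X Y])

lemma comp_arr_inverse_cancel [simp]:
  "is_iso C f X Y \<Longrightarrow> h \<in> Arr \<Longrightarrow> trg h = Y \<Longrightarrow> f \<cdot> (inverse_arr C X Y f \<cdot> h) = h"
  using comp_reduce[OF comp_arr_inverse, of f X Y h] by (simp add: iso_type[of f X Y])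

lemma assoc_naturality:
  assumes "f \<in> Arr" "g \<in> Arr" "h \<in> Arr" "trg f = X" "trg g = Y" "trg h = Z"
  shows "\<alpha> X Y Z \<cdot> ((f \<otimes> g) \<otimes> h) = (f \<otimes> (g \<otimes> h)) \<cdot> \<alpha> (src f) (src g) (src h)"
proof -
  have natural: "\<forall>X \<in> Obj. \<forall>X' \<in> Obj. \<forall>Y \<in> Obj. \<forall>Y' \<in> Obj. \<forall>Z \<in> Obj. \<forall>Z' \<in> Obj.
      \<forall>f \<in> hom C X X'. \<forall>g \<in> hom C Y Y'. \<forall>h \<in> hom C Z Z'.
        \<alpha> X' Y' Z' \<cdot> ((f \<otimes> g) \<otimes> h) = (f \<otimes> (g \<otimes> h)) \<cdot> \<alpha> X Y Z"
    using monoidal unfolding monoidal_def by (elim conjE) assumption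
  show ?thesis
    by (rule natural[rule_format]) (use assms in \<open>auto simp: hom_def\<close>)
qed

lemma assoc_naturality':
  "f \<in> Arr \<Longrightarrow> g \<in> Arr \<Longrightarrow> h \<in> Arr \<Longrightarrow> src f = X \<Longrightarrow> src g = Y \<Longrightarrow> src h = Z \<Longrightarrow>
    (f \<otimes> (g \<otimes> h)) \<cdot> \<alpha> X Y Z = \<alpha> (trg f) (trg g) (trg h) \<cdot> ((f \<otimes> g) \<otimes> h)"
  using assoc_naturality by metis

lemma assoc_naturality_ide_left:
  "h \<in> Arr \<Longrightarrow> X \<in> Obj \<Longrightarrow> Y \<in> Obj \<Longrightarrow> trg h = Z \<Longrightarrow>
    \<alpha> X Y Z \<cdot> (ide (X \<odot> Y) \<otimes> h) = (ide X \<otimes> (ide Y \<otimes> h)) \<cdot> \<alpha> X Y (src h)"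
  using assoc_naturality[of "ide X" "ide Y" h X Y Z] by simp

lemma assoc_naturality_ide_right':
  "f \<in> Arr \<Longrightarrow> Y \<in> Obj \<Longrightarrow> Z \<in> Obj \<Longrightarrow> src f = X \<Longrightarrow>
    (f \<otimes> ide (Y \<odot> Z)) \<cdot> \<alpha> X Y Z = \<alpha> (trg f) Y Z \<cdot> ((f \<otimes> ide Y) \<otimes> ide Z)"
  using assoc_naturality[of f "ide Y" "ide Z" "trg f" Y Z] by simp

lemma lunit_naturality: "f \<in> Arr \<Longrightarrow> trg f = Y \<Longrightarrow> \<l> Y \<cdot> (ide I \<otimes> f) = f \<cdot> \<l> (src f)"
  and runit_naturality: "f \<in> Arr \<Longrightarrow> trg f = Y \<Longrightarrow> \<r> Y \<cdot> (f \<otimes> ide I) = f \<cdot> \<r> (src f)"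
proof -
  have natural: "\<forall>X \<in> Obj. \<forall>Y \<in> Obj. \<forall>f \<in> hom C X Y.
      \<l> Y \<cdot> (ide I \<otimes> f) = f \<cdot> \<l> X \<and> \<r> Y \<cdot> (f \<otimes> ide I) = f \<cdot> \<r> X"
    using monoidal unfolding monoidal_def by (elim conjE) assumption
  show "f \<in> Arr \<Longrightarrow> trg f = Y \<Longrightarrow> \<l> Y \<cdot> (ide I \<otimes> f) = f \<cdot> \<l> (src f)"
    and "f \<in> Arr \<Longrightarrow> trg f = Y \<Longrightarrow> \<r> Y \<cdot> (f \<otimes> ide I) = f \<cdot> \<r> (src f)"
    using natural[rule_format, of "src f" "trg f" f] by (auto simp: hom_def)
qed

lemma pentagon:
  "W \<in> Obj \<Longrightarrow> X \<in> Obj \<Longrightarrow> Y \<in> Obj \<Longrightarrow> Z \<in> Obj \<Longrightarrow>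
    \<alpha> W X (Y \<odot> Z) \<cdot> \<alpha> (W \<odot> X) Y Z = (ide W \<otimes> \<alpha> X Y Z) \<cdot> \<alpha> W (X \<odot> Y) Z \<cdot> (\<alpha> W X Y \<otimes> ide Z)"
  using monoidal unfolding monoidal_def by (elim conjE) simp

lemma triangle: "X \<in> Obj \<Longrightarrow> Y \<in> Obj \<Longrightarrow> (ide X \<otimes> \<l> Y) \<cdot> \<alpha> X I Y = \<r> X \<otimes> ide Y"
  using monoidal unfolding monoidal_def by (elim conjE) simp

lemma sym_type [simp]:
  "X \<in> Obj \<Longrightarrow> Y \<in> Obj \<Longrightarrow> \<sigma> X Y \<in> Arr"
  "X \<in> Obj \<Longrightarrow> Y \<in> Obj \<Longrightarrow> src (\<sigma> X Y) = X \<odot> Y"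
  "X \<in> Obj \<Longrightarrow> Y \<in> Obj \<Longrightarrow> trg (\<sigma> X Y) = Y \<odot> X"
  using symmetric_monoidal unfolding symmetric_monoidal_def hom_def by (elim conjE; simp)+

lemma sym_naturality:
  assumes "f \<in> Arr" "g \<in> Arr" "trg f = X" "trg g = Y"
  shows "\<sigma> X Y \<cdot> (f \<otimes> g) = (g \<otimes> f) \<cdot> \<sigma> (src f) (src g)"
proof -
  have natural: "\<forall>X \<in> Obj. \<forall>X' \<in> Obj. \<forall>Y \<in> Obj. \<forall>Y' \<in> Obj. \<forall>f \<in> hom C X X'. \<forall>g \<in> hom C Y Y'.
      \<sigma> X' Y' \<cdot> (f \<otimes> g) = (g \<otimes> f) \<cdot> \<sigma> X Y"
    using symmetric_monoidal unfolding symmetric_monoidal_def by (elim conjE) assumption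
  show ?thesis
    by (rule natural[rule_format]) (use assms in \<open>auto simp: hom_def\<close>)
qed

lemma sym_naturality':
  "f \<in> Arr \<Longrightarrow> g \<in> Arr \<Longrightarrow> src f = X \<Longrightarrow> src g = Y \<Longrightarrow>
    (g \<otimes> f) \<cdot> \<sigma> X Y = \<sigma> (trg f) (trg g) \<cdot> (f \<otimes> g)"
  using sym_naturality by metis

lemma sym_inverse [simp]: "X \<in> Obj \<Longrightarrow> Y \<in> Obj \<Longrightarrow> \<sigma> Y X \<cdot> \<sigma> X Y = ide (X \<odot> Y)"
  using symmetric_monoidal unfolding symmetric_monoidal_def by (elim conjE) simp

lemma sym_inverse_cancel [simp]:
  "X \<in> Obj \<Longrightarrow> Y \<in> Obj \<Longrightarrow> h \<in> Arr \<Longrightarrow> trg h = X \<odot> Y \<Longrightarrow> \<sigma> Y X \<cdot> (\<sigma> X Y \<cdot> h) = h"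
  using comp_reduce[OF sym_inverse, of X Y h] by simp

lemma hexagon:
  "X \<in> Obj \<Longrightarrow> Y \<in> Obj \<Longrightarrow> Z \<in> Obj \<Longrightarrow>
    \<alpha> Y Z X \<cdot> \<sigma> X (Y \<odot> Z) \<cdot> \<alpha> X Y Z = (ide Y \<otimes> \<sigma> X Z) \<cdot> \<alpha> Y X Z \<cdot> (\<sigma> X Y \<otimes> ide Z)"
  using symmetric_monoidal unfolding symmetric_monoidal_def by (elim conjE) simp

lemma exp_in_Obj [simp]: "B \<in> Obj \<Longrightarrow> Z \<in> Obj \<Longrightarrow> expo C B Z \<in> Obj"
  using symmetric_closed_monoidal unfolding symmetric_closed_monoidal_def by (elim conjE) simp

lemma app_type [simp]:
  "B \<in> Obj \<Longrightarrow> Z \<in> Obj \<Longrightarrow> ev B Z \<in> Arr"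
  "B \<in> Obj \<Longrightarrow> Z \<in> Obj \<Longrightarrow> src (ev B Z) = expo C B Z \<odot> B"
  "B \<in> Obj \<Longrightarrow> Z \<in> Obj \<Longrightarrow> trg (ev B Z) = Z"
  using symmetric_closed_monoidal unfolding symmetric_closed_monoidal_def hom_def
  by (elim conjE; simp)+

lemma curry:
  assumes "X \<in> Obj" "B \<in> Obj" "Z \<in> Obj" "f \<in> Arr" "src f = X \<odot> B" "trg f = Z"
  shows "\<Lambda> X B Z f \<in> Arr" "src (\<Lambda> X B Z f) = X" "trg (\<Lambda> X B Z f) = expo C B Z"
    and "ev B Z \<cdot> (\<Lambda> X B Z f \<otimes> ide B) = f"
proof -
  have "\<forall>X \<in> Obj. \<forall>B \<in> Obj. \<forall>Z \<in> Obj. \<forall>f \<in> hom C (X \<odot> B) Z.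
      \<Lambda> X B Z f \<in> hom C X (expo C B Z) \<and> ev B Z \<cdot> (\<Lambda> X B Z f \<otimes> ide B) = f"
    using symmetric_closed_monoidal unfolding symmetric_closed_monoidal_def by (elim conjE) assumption
  then have "\<Lambda> X B Z f \<in> hom C X (expo C B Z) \<and> ev B Z \<cdot> (\<Lambda> X B Z f \<otimes> ide B) = f"
    using assms by (simp add: hom_def)
  then show "\<Lambda> X B Z f \<in> Arr" "src (\<Lambda> X B Z f) = X" "trg (\<Lambda> X B Z f) = expo C B Z"
    and "ev B Z \<cdot> (\<Lambda> X B Z f \<otimes> ide B) = f"
    by (simp_all add: hom_def)
qed

lemmas curry_type [simp] = curry(1-3)
lemmas app_curry = curry(4)

lemma curry_app:
  assumes "B \<in> Obj" "Z \<in> Obj" "g \<in> Arr" "trg g = expo C B Z" "src g = X"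
  shows "\<Lambda> X B Z (ev B Z \<cdot> (g \<otimes> ide B)) = g"
proof -
  have "\<forall>X \<in> Obj. \<forall>B \<in> Obj. \<forall>Z \<in> Obj. \<forall>g \<in> hom C X (expo C B Z).
      \<Lambda> X B Z (ev B Z \<cdot> (g \<otimes> ide B)) = g"
    using symmetric_closed_monoidal unfolding symmetric_closed_monoidal_def by (elim conjE) assumption
  then show ?thesis
    using assms by (auto simp: hom_def)
qed

lemmas assoc_comp_inv = comp_arr_inverse[OF assoc_iso]
lemmas assoc_inv_comp = comp_inverse_arr[OF assoc_iso]

lemma whisker_right_eq:
  assumes "a \<cdot> b = c" "a \<in> Arr" "b \<in> Arr" "trg b = src a" "X \<in> Obj"
  shows "(a \<otimes> ide X) \<cdot> (b \<otimes> ide X) = c \<otimes> ide X"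
  using assms by (simp flip: whisker_right_comp)

lemma whisker_left_eq:
  assumes "a \<cdot> b = c" "a \<in> Arr" "b \<in> Arr" "trg b = src a" "X \<in> Obj"
  shows "(ide X \<otimes> a) \<cdot> (ide X \<otimes> b) = ide X \<otimes> c"
  using assms by (simp flip: whisker_left_comp)

lemma cancel_split_epi:
  assumes "a \<cdot> p = b \<cdot> p" "p \<cdot> p' = ide Y"
    and "a \<in> Arr" "b \<in> Arr" "p \<in> Arr" "p' \<in> Arr"
    and "trg p = src a" "trg p = src b" "trg p' = src p" "Y = trg p"
  shows "a = b"
proof -
  have "a = a \<cdot> (p \<cdot> p')"
    using assms by simp
  also have "\<dots> = (b \<cdot> p) \<cdot> p'"
    using assms(1,3-) by (simp flip: comp_assoc)
  also have "\<dots> = b"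
    using assms by simp
  finally show ?thesis .
qed

lemma cancel_split_mono:
  assumes "p \<cdot> a = p \<cdot> b" "p' \<cdot> p = ide Y"
    and "a \<in> Arr" "b \<in> Arr" "p \<in> Arr" "p' \<in> Arr"
    and "trg a = src p" "trg b = src p" "trg p = src p'" "Y = src p"
  shows "a = b"
proof -
  have "a = (p' \<cdot> p) \<cdot> a"
    using assms by simp
  also have "\<dots> = p' \<cdot> (p \<cdot> b)"
    using assms(1,3-) by simp
  also have "\<dots> = b"
    using assms by (simp flip: comp_assoc)
  finally show ?thesis .
qed

lemma tensor_unit_left_inj:
  assumes "ide I \<otimes> f = ide I \<otimes> g" "f \<in> Arr" "g \<in> Arr" "src f = src g" "trg f = trg g"
  shows "f = g"
proof -
  have "f \<cdot> \<l> (src f) = \<l> (trg f) \<cdot> (ide I \<otimes> f)" using lunit_naturality assms by metis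
  also have "\<dots> = \<l> (trg g) \<cdot> (ide I \<otimes> g)" using assms by simp
  also have "\<dots> = g \<cdot> \<l> (src f)" using lunit_naturality assms by metis
  finally have "f \<cdot> \<l> (src f) = g \<cdot> \<l> (src f)" .
  then show ?thesis
    by (rule cancel_split_epi[where p' = "\<l>' (src f)"]) (use assms in auto)
qed

lemma tensor_unit_right_inj:
  assumes "f \<otimes> ide I = g \<otimes> ide I" "f \<in> Arr" "g \<in> Arr" "src f = src g" "trg f = trg g"
  shows "f = g"
proof -
  have "f \<cdot> \<r> (src f) = \<r> (trg f) \<cdot> (f \<otimes> ide I)" using runit_naturality assms by metis
  also have "\<dots> = \<r> (trg g) \<cdot> (g \<otimes> ide I)" using assms by simp
  also have "\<dots> = g \<cdot> \<r> (src f)" using runit_naturality assms by metis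
  finally have "f \<cdot> \<r> (src f) = g \<cdot> \<r> (src f)" .
  then show ?thesis
    by (rule cancel_split_epi[where p' = "\<r>' (src f)"]) (use assms in auto)
qed

lemma interchange_slide:
  assumes "f \<in> Arr" "g \<in> Arr" "h \<in> Arr" "trg f = Y" "trg h = src g"
  shows "(ide Y \<otimes> g) \<cdot> (f \<otimes> h) = (f \<otimes> ide (trg g)) \<cdot> (ide (src f) \<otimes> (g \<cdot> h))"
proof -
  have "Y \<in> Obj" using assms(1,4) by auto
  have "(ide Y \<otimes> g) \<cdot> (f \<otimes> h) = (ide Y \<cdot> f) \<otimes> (g \<cdot> h)"
    by (rule interchange[symmetric]) (use assms \<open>Y \<in> Obj\<close> in simp_all)
  also have "\<dots> = (f \<cdot> ide (src f)) \<otimes> (ide (trg g) \<cdot> (g \<cdot> h))"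
    using assms by simp
  also have "\<dots> = (f \<otimes> ide (trg g)) \<cdot> (ide (src f) \<otimes> (g \<cdot> h))"
    by (rule interchange) (use assms in simp_all)
  finally show ?thesis .
qed

lemma runit_inv_naturality:
  assumes "f \<in> Arr" "trg f = Y"
  shows "\<r>' Y \<cdot> f = (f \<otimes> ide I) \<cdot> \<r>' (src f)"
proof -
  have "Y \<in> Obj" using assms by auto
  have "\<r> Y \<cdot> (\<r>' Y \<cdot> f) = \<r> Y \<cdot> ((f \<otimes> ide I) \<cdot> \<r>' (src f))"
    using assms \<open>Y \<in> Obj\<close> by (simp add: comp_reduce[OF runit_naturality])
  then show ?thesis
    by (rule cancel_split_mono[where p'="\<r>' Y"]) (use assms \<open>Y \<in> Obj\<close> in simp_all)
qed

lemma curry_comp: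
  assumes "X \<in> Obj" "B \<in> Obj" "Z \<in> Obj" "f \<in> Arr" "src f = X \<odot> B" "trg f = Z"
    "g \<in> Arr" "trg g = X"
  shows "\<Lambda> X B Z f \<cdot> g = \<Lambda> (src g) B Z (f \<cdot> (g \<otimes> ide B))"
proof -
  have "\<Lambda> X B Z f \<cdot> g = \<Lambda> (src (\<Lambda> X B Z f \<cdot> g)) B Z (ev B Z \<cdot> ((\<Lambda> X B Z f \<cdot> g) \<otimes> ide B))"
    by (rule curry_app[symmetric]) (use assms in simp_all)
  also have "\<dots> = \<Lambda> (src g) B Z (f \<cdot> (g \<otimes> ide B))"
    using assms by (simp add: comp_reduce[OF app_curry])
  finally show ?thesis .
qed

lemma curry_app_ide: "B \<in> Obj \<Longrightarrow> Z \<in> Obj \<Longrightarrow> \<Lambda> (expo C B Z) B Z (ev B Z) = ide (expo C B Z)"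
  using curry_app[of B Z "ide (expo C B Z)" "expo C B Z"] by simp

lemma lunit_tensor:
  assumes "X \<in> Obj" "Y \<in> Obj"
  shows "\<l> (X \<odot> Y) \<cdot> \<alpha> I X Y = \<l> X \<otimes> ide Y"
proof -
  let ?P = "\<alpha> I (I \<odot> X) Y \<cdot> (\<alpha> I I X \<otimes> ide Y)"
  have "(ide I \<otimes> (\<l> (X \<odot> Y) \<cdot> \<alpha> I X Y)) \<cdot> ?P =
      (ide I \<otimes> \<l> (X \<odot> Y)) \<cdot> (\<alpha> I I (X \<odot> Y) \<cdot> \<alpha> (I \<odot> I) X Y)"
    using assms by (simp add: pentagon)
  also have "\<dots> = (\<r> I \<otimes> ide (X \<odot> Y)) \<cdot> \<alpha> (I \<odot> I) X Y"
    using assms by (simp add: comp_reduce[OF triangle])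
  also have "\<dots> = \<alpha> I X Y \<cdot> ((\<r> I \<otimes> ide X) \<otimes> ide Y)"
    using assms by (simp add: assoc_naturality_ide_right')
  also have "\<dots> = \<alpha> I X Y \<cdot> (((ide I \<otimes> \<l> X) \<cdot> \<alpha> I I X) \<otimes> ide Y)"
    using assms by (simp add: triangle)
  also have "\<dots> = (ide I \<otimes> (\<l> X \<otimes> ide Y)) \<cdot> ?P"
    using assms by (simp add: comp_reduce[OF assoc_naturality])
  finally have "(ide I \<otimes> (\<l> (X \<odot> Y) \<cdot> \<alpha> I X Y)) \<cdot> ?P = (ide I \<otimes> (\<l> X \<otimes> ide Y)) \<cdot> ?P" .
  then have "ide I \<otimes> (\<l> (X \<odot> Y) \<cdot> \<alpha> I X Y) = ide I \<otimes> (\<l> X \<otimes> ide Y)"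
    by (rule cancel_split_epi[where p' = "(\<alpha>' I I X \<otimes> ide Y) \<cdot> \<alpha>' I (I \<odot> X) Y"]) (use assms in
        \<open>simp_all add: comp_reduce[OF whisker_right_eq[OF assoc_comp_inv]]\<close>)
  then show ?thesis by (rule tensor_unit_left_inj) (use assms in simp_all)
qed

lemma lunit_sym:
  assumes X: "X \<in> Obj"
  shows "\<l> X \<cdot> \<sigma> X I = \<r> X"
proof -
  have "\<sigma> X I \<cdot> (\<r> X \<otimes> ide I) = \<l> (I \<odot> X) \<cdot> (\<alpha> I I X \<cdot> (\<sigma> X (I \<odot> I) \<cdot> \<alpha> X I I))"
    using X by (simp add: comp_reduce[OF lunit_tensor] comp_reduce[OF sym_naturality'] triangle)
  also have "\<dots> = \<l> (I \<odot> X) \<cdot> ((ide I \<otimes> \<sigma> X I) \<cdot> (\<alpha> I X I \<cdot> (\<sigma> X I \<otimes> ide I)))"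
    using X by (simp add: hexagon)
  also have "\<dots> = \<sigma> X I \<cdot> ((\<l> X \<cdot> \<sigma> X I) \<otimes> ide I)"
    using X by (simp add: comp_reduce[OF lunit_naturality] comp_reduce[OF lunit_tensor])
  finally have "\<r> X \<otimes> ide I = (\<l> X \<cdot> \<sigma> X I) \<otimes> ide I"
    by (rule cancel_split_mono[where p'="\<sigma> I X"]) (use X in simp_all)
  then show ?thesis
    by (rule tensor_unit_right_inj[symmetric]) (use X in simp_all)
qed

lemma runit_sym:
  assumes X: "X \<in> Obj"
  shows "\<r> X \<cdot> \<sigma> I X = \<l> X"
  using X by (simp add: lunit_sym[symmetric])

lemma hexagon':
  assumes "X \<in> Obj" "Y \<in> Obj" "Z \<in> Obj"
  shows "\<alpha> Y Z X \<cdot> \<sigma> X (Y \<odot> Z) = (ide Y \<otimes> \<sigma> X Z) \<cdot> \<alpha> Y X Z \<cdot> (\<sigma> X Y \<otimes> ide Z) \<cdot> \<alpha>' X Y Z"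
proof -
  have "(\<alpha> Y Z X \<cdot> \<sigma> X (Y \<odot> Z)) \<cdot> \<alpha> X Y Z =
      ((ide Y \<otimes> \<sigma> X Z) \<cdot> \<alpha> Y X Z \<cdot> (\<sigma> X Y \<otimes> ide Z) \<cdot> \<alpha>' X Y Z) \<cdot> \<alpha> X Y Z"
    using assms by (simp add: hexagon)
  then show ?thesis by (rule cancel_split_epi[where p'="\<alpha>' X Y Z"]) (use assms in simp_all)
qed

text \<open>The second hexagon identity, obtained from the first by inverting the symmetry.\<close>

lemma hexagon_dual:
  assumes "P \<in> Obj" "Q \<in> Obj" "R \<in> Obj"
  shows "\<alpha> R Q P \<cdot> (\<sigma> Q R \<otimes> ide P) \<cdot> \<sigma> P (Q \<odot> R) \<cdot> \<alpha> P Q R = (ide R \<otimes> \<sigma> P Q) \<cdot> \<sigma> (P \<odot> Q) R"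
proof -
  have "(\<alpha> R Q P \<cdot> (\<sigma> Q R \<otimes> ide P) \<cdot> \<sigma> P (Q \<odot> R) \<cdot> \<alpha> P Q R) \<cdot> \<sigma> R (P \<odot> Q) =
      ((ide R \<otimes> \<sigma> P Q) \<cdot> \<sigma> (P \<odot> Q) R) \<cdot> \<sigma> R (P \<odot> Q)"
    using assms by (simp add: comp_reduce[OF hexagon'] hexagon' comp_reduce[OF sym_naturality]
        comp_reduce[OF whisker_right_eq[OF sym_inverse]] comp_reduce3[OF hexagon]
        whisker_right_eq[OF sym_inverse])
  then show ?thesis by (rule cancel_split_epi[where p'="\<sigma> (P \<odot> Q) R"]) (use assms in simp_all)
qed

lemma sym_reverse3:
  assumes "P \<in> Obj" "Q \<in> Obj" "R \<in> Obj"
  shows "\<sigma> (Q \<odot> R) P \<cdot> (\<sigma> R Q \<otimes> ide P) \<cdot> \<alpha>' R Q P =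
    \<alpha> P Q R \<cdot> \<sigma> R (P \<odot> Q) \<cdot> (ide R \<otimes> \<sigma> Q P)"
proof -
  let ?p = "(ide R \<otimes> \<sigma> P Q) \<cdot> \<sigma> (P \<odot> Q) R"
  have l: "(\<sigma> (Q \<odot> R) P \<cdot> (\<sigma> R Q \<otimes> ide P) \<cdot> \<alpha>' R Q P) \<cdot> ?p = \<alpha> P Q R"
    using assms by (simp add: hexagon_dual[symmetric] comp_reduce[OF whisker_right_eq[OF sym_inverse]])
  have r: "(\<alpha> P Q R \<cdot> \<sigma> R (P \<odot> Q) \<cdot> (ide R \<otimes> \<sigma> Q P)) \<cdot> ?p = \<alpha> P Q R"
    using assms by (simp add: comp_reduce[OF whisker_left_eq[OF sym_inverse]])
  from trans[OF l r[symmetric]] show ?thesis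
    by (rule cancel_split_epi[where p'="\<sigma> R (P \<odot> Q) \<cdot> (ide R \<otimes> \<sigma> Q P)"])
      (use assms in \<open>simp_all add: comp_reduce[OF whisker_left_eq[OF sym_inverse]]
        whisker_left_eq[OF sym_inverse]\<close>)
qed

lemma sym_move_front:
  assumes "X \<in> Obj" "Y \<in> Obj" "Z \<in> Obj"
  shows "\<sigma> (Y \<odot> Z) X \<cdot> \<alpha>' Y Z X \<cdot> (ide Y \<otimes> \<sigma> X Z) = \<alpha> X Y Z \<cdot> (\<sigma> Y X \<otimes> ide Z) \<cdot> \<alpha>' Y X Z"
proof -
  let ?p = "\<alpha> Y X Z \<cdot> (\<sigma> X Y \<otimes> ide Z) \<cdot> \<alpha>' X Y Z"
  have l: "(\<sigma> (Y \<odot> Z) X \<cdot> \<alpha>' Y Z X \<cdot> (ide Y \<otimes> \<sigma> X Z)) \<cdot> ?p = ide (X \<odot> (Y \<odot> Z))"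
    using assms by (simp add: hexagon'[symmetric])
  have r: "(\<alpha> X Y Z \<cdot> (\<sigma> Y X \<otimes> ide Z) \<cdot> \<alpha>' Y X Z) \<cdot> ?p = ide (X \<odot> (Y \<odot> Z))"
    using assms by (simp add: comp_reduce[OF whisker_right_eq[OF sym_inverse]])
  from trans[OF l r[symmetric]] show ?thesis
    by (rule cancel_split_epi[where p'="\<alpha> X Y Z \<cdot> (\<sigma> Y X \<otimes> ide Z) \<cdot> \<alpha>' Y X Z"])
      (use assms in \<open>simp_all add: comp_reduce[OF whisker_right_eq[OF sym_inverse]]\<close>)
qed

end

locale commutative_monad_over_smcc =
  symmetric_closed_monoidal_category C for C :: "('o, 'm) smcc" +
  fixes M :: "('o, 'm) smonad"
  assumes commutative_monad: "commutative_monad C M"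
begin

abbreviation "MO X \<equiv> Mo M X"
abbreviation "MF f \<equiv> Mm M f"
abbreviation "\<eta> X \<equiv> eta M X"
abbreviation "\<mu> X \<equiv> mu M X"
abbreviation "\<tau> X Y \<equiv> tau M X Y"
abbreviation "\<tau>' X Y \<equiv> ltau C M X Y"

lemma strong_monad: "strong_monad C M"
  using commutative_monad unfolding commutative_monad_def by blast
lemma monad: "monad C M"
  using strong_monad unfolding strong_monad_def by blast

lemma Mo_in_Obj [simp]: "X \<in> Obj \<Longrightarrow> MO X \<in> Obj"
  using monad unfolding monad_def by (elim conjE) simp

lemma Mm_type [simp]:
  assumes "f \<in> Arr"
  shows "MF f \<in> Arr" "src (MF f) = MO (src f)" "trg (MF f) = MO (trg f)"
proof -
  have closed: "\<forall>X \<in> Obj. \<forall>Y \<in> Obj. \<forall>f \<in> hom C X Y. MF f \<in> hom C (MO X) (MO Y)"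
    using monad unfolding monad_def by (elim conjE) assumption
  have "MF f \<in> hom C (MO (src f)) (MO (trg f))"
    by (rule closed[rule_format]) (use assms in \<open>simp_all add: hom_def\<close>)
  then show "MF f \<in> Arr" "src (MF f) = MO (src f)" "trg (MF f) = MO (trg f)"
    by (simp_all add: hom_def)
qed

lemma Mm_ide [simp]: "X \<in> Obj \<Longrightarrow> MF (ide X) = ide (MO X)"
  using monad unfolding monad_def by (elim conjE) simp

lemma Mm_comp [simp]: "f \<in> Arr \<Longrightarrow> g \<in> Arr \<Longrightarrow> trg f = src g \<Longrightarrow> MF (g \<cdot> f) = MF g \<cdot> MF f"
  using monad unfolding monad_def by (elim conjE) simp

lemma eta_type [simp]:
  "X \<in> Obj \<Longrightarrow> \<eta> X \<in> Arr" "X \<in> Obj \<Longrightarrow> src (\<eta> X) = X" "X \<in> Obj \<Longrightarrow> trg (\<eta> X) = MO X"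
  using monad unfolding monad_def hom_def by (elim conjE; simp)+

lemma mu_type [simp]:
  "X \<in> Obj \<Longrightarrow> \<mu> X \<in> Arr" "X \<in> Obj \<Longrightarrow> src (\<mu> X) = MO (MO X)" "X \<in> Obj \<Longrightarrow> trg (\<mu> X) = MO X"
  using monad unfolding monad_def hom_def by (elim conjE; simp)+

lemma eta_naturality: "f \<in> Arr \<Longrightarrow> trg f = X \<Longrightarrow> \<eta> X \<cdot> f = MF f \<cdot> \<eta> (src f)"
  and mu_naturality: "f \<in> Arr \<Longrightarrow> trg f = X \<Longrightarrow> \<mu> X \<cdot> MF (MF f) = MF f \<cdot> \<mu> (src f)"
proof -
  have natural: "\<forall>X \<in> Obj. \<forall>Y \<in> Obj. \<forall>f \<in> hom C X Y.
      \<eta> Y \<cdot> f = MF f \<cdot> \<eta> X \<and> \<mu> Y \<cdot> MF (MF f) = MF f \<cdot> \<mu> X"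
    using monad unfolding monad_def by (elim conjE) assumption
  show "f \<in> Arr \<Longrightarrow> trg f = X \<Longrightarrow> \<eta> X \<cdot> f = MF f \<cdot> \<eta> (src f)"
    and "f \<in> Arr \<Longrightarrow> trg f = X \<Longrightarrow> \<mu> X \<cdot> MF (MF f) = MF f \<cdot> \<mu> (src f)"
    using natural[rule_format, of "src f" "trg f" f] by (auto simp: hom_def)
qed

lemma eta_naturality': "f \<in> Arr \<Longrightarrow> src f = X \<Longrightarrow> MF f \<cdot> \<eta> X = \<eta> (trg f) \<cdot> f"
  using eta_naturality by metis

lemma mu_naturality': "f \<in> Arr \<Longrightarrow> src f = X \<Longrightarrow> MF f \<cdot> \<mu> X = \<mu> (trg f) \<cdot> MF (MF f)"
  using mu_naturality by metis

lemma mu_assoc: "X \<in> Obj \<Longrightarrow> \<mu> X \<cdot> MF (\<mu> X) = \<mu> X \<cdot> \<mu> (MO X)"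
  using monad unfolding monad_def by (elim conjE) simp

lemma mu_eta_Mo [simp]: "X \<in> Obj \<Longrightarrow> \<mu> X \<cdot> \<eta> (MO X) = ide (MO X)"
  using monad unfolding monad_def by (elim conjE) simp

lemma mu_Mm_eta [simp]: "X \<in> Obj \<Longrightarrow> \<mu> X \<cdot> MF (\<eta> X) = ide (MO X)"
  using monad unfolding monad_def by (elim conjE) simp

lemma mu_eta_Mo_cancel [simp]:
  "X \<in> Obj \<Longrightarrow> h \<in> Arr \<Longrightarrow> trg h = MO X \<Longrightarrow>
    \<mu> X \<cdot> (\<eta> (MO X) \<cdot> h) = h"
  using comp_reduce[OF mu_eta_Mo, of X h] by simp

lemma mu_Mm_eta_cancel [simp]:
  "X \<in> Obj \<Longrightarrow> h \<in> Arr \<Longrightarrow> trg h = MO X \<Longrightarrow>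
    \<mu> X \<cdot> (MF (\<eta> X) \<cdot> h) = h"
  using comp_reduce[OF mu_Mm_eta, of X h] by simp

lemma tau_type [simp]:
  "X \<in> Obj \<Longrightarrow> Y \<in> Obj \<Longrightarrow> \<tau> X Y \<in> Arr"
  "X \<in> Obj \<Longrightarrow> Y \<in> Obj \<Longrightarrow> src (\<tau> X Y) = MO X \<odot> Y"
  "X \<in> Obj \<Longrightarrow> Y \<in> Obj \<Longrightarrow> trg (\<tau> X Y) = MO (X \<odot> Y)"
  using strong_monad unfolding strong_monad_def hom_def by (elim conjE; simp)+

lemma tau_naturality:
  assumes "f \<in> Arr" "g \<in> Arr" "trg f = X" "trg g = Y"
  shows "\<tau> X Y \<cdot> (MF f \<otimes> g) = MF (f \<otimes> g) \<cdot> \<tau> (src f) (src g)"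
proof -
  have natural: "\<forall>X \<in> Obj. \<forall>X' \<in> Obj. \<forall>Y \<in> Obj. \<forall>Y' \<in> Obj. \<forall>f \<in> hom C X X'. \<forall>g \<in> hom C Y Y'.
      \<tau> X' Y' \<cdot> (MF f \<otimes> g) = MF (f \<otimes> g) \<cdot> \<tau> X Y"
    using strong_monad unfolding strong_monad_def by (elim conjE) assumption
  show ?thesis
    by (rule natural[rule_format]) (use assms in \<open>auto simp: hom_def\<close>)
qed

lemma tau_naturality_ide:
  "g \<in> Arr \<Longrightarrow> X \<in> Obj \<Longrightarrow> trg g = Y \<Longrightarrow> \<tau> X Y \<cdot> (ide (MO X) \<otimes> g) = MF (ide X \<otimes> g) \<cdot> \<tau> X (src g)"
  using tau_naturality[of "ide X" g X Y] by simp

lemma tau_naturality_ide':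
  "g \<in> Arr \<Longrightarrow> X \<in> Obj \<Longrightarrow> src g = Y \<Longrightarrow> MF (ide X \<otimes> g) \<cdot> \<tau> X Y = \<tau> X (trg g) \<cdot> (ide (MO X) \<otimes> g)"
  using tau_naturality[of "ide X" g X "trg g"] by simp

lemma tau_runit: "X \<in> Obj \<Longrightarrow> MF (\<r> X) \<cdot> \<tau> X I = \<r> (MO X)"
  using strong_monad unfolding strong_monad_def by (elim conjE) simp

lemma tau_assoc:
  "X \<in> Obj \<Longrightarrow> Y \<in> Obj \<Longrightarrow> Z \<in> Obj \<Longrightarrow>
    \<tau> X (Y \<odot> Z) \<cdot> \<alpha> (MO X) Y Z = MF (\<alpha> X Y Z) \<cdot> \<tau> (X \<odot> Y) Z \<cdot> (\<tau> X Y \<otimes> ide Z)"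
  using strong_monad unfolding strong_monad_def by (elim conjE) simp

lemma tau_eta: "X \<in> Obj \<Longrightarrow> Y \<in> Obj \<Longrightarrow> \<tau> X Y \<cdot> (\<eta> X \<otimes> ide Y) = \<eta> (X \<odot> Y)"
  using strong_monad unfolding strong_monad_def by (elim conjE) simp

lemma tau_mu:
  "X \<in> Obj \<Longrightarrow> Y \<in> Obj \<Longrightarrow> \<tau> X Y \<cdot> (\<mu> X \<otimes> ide Y) = \<mu> (X \<odot> Y) \<cdot> MF (\<tau> X Y) \<cdot> \<tau> (MO X) Y"
  using strong_monad unfolding strong_monad_def by (elim conjE) simp

lemma tau_commute:
  "X \<in> Obj \<Longrightarrow> Y \<in> Obj \<Longrightarrow>
    \<mu> (X \<odot> Y) \<cdot> MF (\<tau> X Y) \<cdot> \<tau>' (MO X) Y = \<mu> (X \<odot> Y) \<cdot> MF (\<tau>' X Y) \<cdot> \<tau> X (MO Y)"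
  using commutative_monad unfolding commutative_monad_def by (elim conjE) simp

lemma ltau_type [simp]:
  "X \<in> Obj \<Longrightarrow> Y \<in> Obj \<Longrightarrow> \<tau>' X Y \<in> Arr"
  "X \<in> Obj \<Longrightarrow> Y \<in> Obj \<Longrightarrow> src (\<tau>' X Y) = X \<odot> MO Y"
  "X \<in> Obj \<Longrightarrow> Y \<in> Obj \<Longrightarrow> trg (\<tau>' X Y) = MO (X \<odot> Y)"
  unfolding ltau_def by simp_all

lemma Mm_comp_eq:
  assumes "a \<cdot> b = c" "a \<in> Arr" "b \<in> Arr" "trg b = src a"
  shows "MF a \<cdot> MF b = MF c"
  using assms by (simp flip: Mm_comp)

lemma Mm_comp3_eq:
  assumes "a \<cdot> (b \<cdot> c) = d" "a \<in> Arr" "b \<in> Arr" "c \<in> Arr" "trg b = src a" "trg c = src b"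
  shows "MF a \<cdot> (MF b \<cdot> MF c) = MF d"
  using assms by (simp flip: Mm_comp)

lemma ltau_naturality:
  assumes "f \<in> Arr" "g \<in> Arr" "trg f = X" "trg g = Y"
  shows "\<tau>' X Y \<cdot> (f \<otimes> MF g) = MF (f \<otimes> g) \<cdot> \<tau>' (src f) (src g)"
  using assms trg_in_Obj[OF assms(1)] trg_in_Obj[OF assms(2)]
  by (simp add: ltau_def comp_reduce[OF sym_naturality] comp_reduce[OF tau_naturality]
      sym_naturality comp_reduce[OF Mm_comp_eq[OF sym_naturality]])

lemma ltau_naturality_ide: "f \<in> Arr \<Longrightarrow> Y \<in> Obj \<Longrightarrow> trg f = X \<Longrightarrow>
   \<tau>' X Y \<cdot> (f \<otimes> ide (MO Y)) = MF (f \<otimes> ide Y) \<cdot> \<tau>' (src f) Y"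
  using ltau_naturality[of f "ide Y" X Y] by simp

lemma ltau_naturality': "f \<in> Arr \<Longrightarrow> g \<in> Arr \<Longrightarrow> src f = X \<Longrightarrow> src g = Y \<Longrightarrow>
   MF (f \<otimes> g) \<cdot> \<tau>' X Y = \<tau>' (trg f) (trg g) \<cdot> (f \<otimes> MF g)"
  using ltau_naturality[of f g "trg f" "trg g"] by simp

lemma ltau_eta:
  assumes "X \<in> Obj" "Y \<in> Obj"
  shows "\<tau>' X Y \<cdot> (ide X \<otimes> \<eta> Y) = \<eta> (X \<odot> Y)"
  using assms
  by (simp add: ltau_def sym_naturality comp_reduce[OF sym_naturality] comp_reduce[OF tau_eta]
      comp_reduce[OF eta_naturality'] eta_naturality')

lemma ltau_mu:
  assumes "X \<in> Obj" "Y \<in> Obj"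
  shows "\<tau>' X Y \<cdot> (ide X \<otimes> \<mu> Y) = \<mu> (X \<odot> Y) \<cdot> MF (\<tau>' X Y) \<cdot> \<tau>' X (MO Y)"
  using assms
  by (simp add: ltau_def sym_naturality comp_reduce[OF sym_naturality] comp_reduce[OF tau_mu]
      comp_reduce[OF mu_naturality'] mu_naturality' comp_reduce[OF Mm_comp_eq[OF sym_inverse]])

lemma ltau_mu_comp: "X \<in> Obj \<Longrightarrow> Y \<in> Obj \<Longrightarrow> h \<in> Arr \<Longrightarrow> trg h = X \<odot> MO (MO Y) \<Longrightarrow>
  \<mu> (X \<odot> Y) \<cdot> (MF (\<tau>' X Y) \<cdot> (\<tau>' X (MO Y) \<cdot> h)) = \<tau>' X Y \<cdot> ((ide X \<otimes> \<mu> Y) \<cdot> h)"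
  using comp_reduce3[OF ltau_mu[symmetric], of X Y h] by simp

lemma ltau_lunit:
  assumes Y: "Y \<in> Obj"
  shows "MF (\<l> Y) \<cdot> \<tau>' I Y = \<l> (MO Y)"
  using Y by (simp add: ltau_def comp_reduce[OF Mm_comp_eq[OF lunit_sym]] comp_reduce[OF tau_runit]
      runit_sym)

lemma tau_assoc_inv:
  assumes "X \<in> Obj" "Y \<in> Obj" "Z \<in> Obj"
  shows "\<tau> (X \<odot> Y) Z \<cdot> (\<tau> X Y \<otimes> ide Z) = MF (\<alpha>' X Y Z) \<cdot> \<tau> X (Y \<odot> Z) \<cdot> \<alpha> (MO X) Y Z"
proof -
  have l: "MF (\<alpha> X Y Z) \<cdot> (\<tau> (X \<odot> Y) Z \<cdot> (\<tau> X Y \<otimes> ide Z)) = \<tau> X (Y \<odot> Z) \<cdot> \<alpha> (MO X) Y Z"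
    using assms by (simp add: tau_assoc)
  have r: "MF (\<alpha> X Y Z) \<cdot> (MF (\<alpha>' X Y Z) \<cdot> \<tau> X (Y \<odot> Z) \<cdot> \<alpha> (MO X) Y Z) =
      \<tau> X (Y \<odot> Z) \<cdot> \<alpha> (MO X) Y Z"
    using assms by (simp add: comp_reduce[OF Mm_comp_eq[OF assoc_comp_inv]])
  from trans[OF l r[symmetric]] show ?thesis
    by (rule cancel_split_mono[where p'="MF (\<alpha>' X Y Z)"])
      (use assms in \<open>simp_all add: Mm_comp_eq[OF assoc_inv_comp]\<close>)
qed

text \<open>The left strength \<open>\<tau>'\<close> is \<open>\<tau>\<close> conjugated by the symmetry, so it inherits the strength laws;
  for associativity the braid identities \<open>sym_reverse3\<close> and \<open>sym_move_front\<close> supply the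
  coherence.\<close>

lemma ltau_assoc:
  assumes "X \<in> Obj" "Y \<in> Obj" "Z \<in> Obj"
  shows "MF (\<alpha> X Y Z) \<cdot> \<tau>' (X \<odot> Y) Z = \<tau>' X (Y \<odot> Z) \<cdot> (ide X \<otimes> \<tau>' Y Z) \<cdot> \<alpha> X Y (MO Z)"
  using assms
  by (simp add: ltau_def comp_reduce[OF sym_naturality] comp_reduce[OF tau_naturality]
      comp_reduce[OF tau_assoc_inv] hexagon_dual comp_reduce[OF tau_naturality_ide]
      comp_reduce3[OF Mm_comp3_eq[OF sym_reverse3]]
      comp_reduce[OF Mm_comp_eq[OF whisker_left_eq[OF sym_inverse]]])

lemma tau_ltau_assoc:
  assumes "X \<in> Obj" "Y \<in> Obj" "Z \<in> Obj"
  shows "MF (\<alpha> X Y Z) \<cdot> \<tau> (X \<odot> Y) Z \<cdot> (\<tau>' X Y \<otimes> ide Z) =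
      \<tau>' X (Y \<odot> Z) \<cdot> (ide X \<otimes> \<tau> Y Z) \<cdot> \<alpha> X (MO Y) Z"
  using assms
  by (simp add: ltau_def comp_reduce[OF sym_naturality] comp_reduce[OF tau_naturality]
      comp_reduce[OF tau_assoc_inv] hexagon comp_reduce3[OF hexagon]
      comp_reduce[OF tau_naturality_ide]
      comp_reduce3[OF Mm_comp3_eq[OF sym_move_front]])

end

locale sym_em_monoid_on_free_algebra =
  commutative_monad_over_smcc C M for C :: "('o, 'm) smcc" and M :: "('o, 'm) smonad" +
  fixes A :: 'o and m u :: 'm
  assumes A_in_Obj [simp]: "A \<in> Ob C"
    and sym_em_monoid: "sym_em_monoid C M (Mo M A) (mu M A) m u"
begin

abbreviation "MA \<equiv> MO A"
abbreviation "K \<equiv> expo C A MA"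
abbreviation "ev_A \<equiv> ev A MA"
abbreviation "q \<equiv> qmap C M A"
abbreviation "w \<equiv> wmap C M A"
abbreviation "kc \<equiv> kcomp C M A"
abbreviation "ki \<equiv> kident C M A"
abbreviation "a_K \<equiv> \<Lambda> (MO K) A MA q"
abbreviation "s \<equiv> m \<cdot> (ide MA \<otimes> \<eta> A)"
abbreviation "Ls \<equiv> \<Lambda> MA A MA s"
abbreviation "ev_ext \<equiv> \<mu> A \<cdot> MF ev_A \<cdot> \<tau>' K A"

lemma mult_type [simp]: "m \<in> Arr" "src m = MA \<odot> MA" "trg m = MA"
  using sym_em_monoid unfolding sym_em_monoid_def hom_def by auto

lemma unit_type [simp]: "u \<in> Arr" "src u = I" "trg u = MA"
  using sym_em_monoid unfolding sym_em_monoid_def hom_def by auto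

lemma mult_assoc: "m \<cdot> (m \<otimes> ide MA) = m \<cdot> (ide MA \<otimes> m) \<cdot> \<alpha> MA MA MA"
  using sym_em_monoid unfolding sym_em_monoid_def by blast

lemma mult_unit_left: "m \<cdot> (u \<otimes> ide MA) = \<l> MA"
  using sym_em_monoid unfolding sym_em_monoid_def by blast

lemma mult_unit_right: "m \<cdot> (ide MA \<otimes> u) = \<r> MA"
  using sym_em_monoid unfolding sym_em_monoid_def by blast

lemma mult_compat: "\<mu> A \<cdot> MF m \<cdot> \<mu> (MA \<odot> MA) \<cdot> MF (\<tau>' MA MA) \<cdot> \<tau> MA (MO MA) = m \<cdot> (\<mu> A \<otimes> \<mu> A)"
  using sym_em_monoid unfolding sym_em_monoid_def by blast

lemma qmap_type [simp]: "q \<in> Arr" "src q = MO K \<odot> A" "trg q = MA"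
  unfolding qmap_def by simp_all

lemma wmap_type [simp]: "w \<in> Arr" "src w = (K \<odot> K) \<odot> A" "trg w = MA"
  unfolding wmap_def by simp_all

lemma kcomp_type [simp]: "kc \<in> Arr" "src kc = K \<odot> K" "trg kc = K"
  unfolding kcomp_def by simp_all

lemma kident_type [simp]: "ki \<in> Arr" "src ki = I" "trg ki = K"
  unfolding kident_def by simp_all

lemma app_kcomp: "ev_A \<cdot> (kc \<otimes> ide A) = w"
  unfolding kcomp_def by (simp add: app_curry)

lemma mult_mu_right: "m \<cdot> (ide MA \<otimes> \<mu> A) = \<mu> A \<cdot> MF m \<cdot> \<tau>' MA MA"
proof -
  have "m \<cdot> (ide MA \<otimes> \<mu> A) = m \<cdot> ((\<mu> A \<otimes> \<mu> A) \<cdot> (\<eta> MA \<otimes> ide (MO MA)))"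
    by (simp add: interchange[symmetric])
  also have "\<dots> = \<mu> A \<cdot> MF m \<cdot> \<tau>' MA MA"
    by (simp add: comp_reduce[OF mult_compat[symmetric]] tau_eta eta_naturality')
  finally show ?thesis .
qed

lemma mult_mu_left: "m \<cdot> (\<mu> A \<otimes> ide MA) = \<mu> A \<cdot> MF m \<cdot> \<tau> MA MA"
proof -
  have "m \<cdot> (\<mu> A \<otimes> ide MA) = m \<cdot> ((\<mu> A \<otimes> \<mu> A) \<cdot> (ide (MO MA) \<otimes> \<eta> MA))"
    by (simp add: interchange[symmetric])
  also have "\<dots> = \<mu> A \<cdot> MF m \<cdot> \<tau> MA MA"
    by (simp add: comp_reduce[OF mult_compat[symmetric]] tau_naturality_ide
        comp_reduce[OF Mm_comp_eq[OF ltau_eta]])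
  finally show ?thesis .
qed

lemma ext_s_eq_mult: "\<mu> A \<cdot> (MF m \<cdot> (MF (ide MA \<otimes> \<eta> A) \<cdot> \<tau>' MA A)) = m"
  by (simp add: ltau_naturality' comp_reduce3[OF mult_mu_right[symmetric]] mult_mu_right[symmetric]
      whisker_left_eq[OF mu_Mm_eta])

lemma Ls_algebra_hom: "Ls \<cdot> \<mu> A = a_K \<cdot> MF Ls"
  by (simp add: curry_comp qmap_def interchange_slide[of "\<mu> A"] comp_reduce[OF mult_mu_left]
      tau_naturality_ide tau_naturality comp_reduce[OF Mm_comp_eq[OF app_curry]])

lemma Ls_unit: "Ls \<cdot> u = ki"
  by (simp add: curry_comp kident_def interchange_slide[of u] comp_reduce[OF mult_unit_left]
      lunit_naturality)

lemma Ls_mult: "Ls \<cdot> m = kc \<cdot> (Ls \<otimes> Ls)"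
  by (simp add: kcomp_def curry_comp wmap_def interchange_slide[of m] comp_reduce[OF mult_assoc]
      assoc_naturality_ide_left assoc_naturality
      comp_reduce[OF interchange_slide[of Ls]] app_curry comp_reduce[OF ltau_naturality_ide]
      comp_reduce[OF Mm_comp_eq[OF app_curry]] comp_reduce4[OF ext_s_eq_mult])

lemma a_K_eta: "a_K \<cdot> \<eta> K = ide K"
  by (simp add: curry_comp qmap_def tau_eta eta_naturality' curry_app_ide)

lemma a_K_mu: "a_K \<cdot> MF a_K = a_K \<cdot> \<mu> K"
  by (simp add: curry_comp qmap_def tau_naturality comp_reduce[OF Mm_comp_eq[OF app_curry]]
      comp_reduce[OF mu_assoc] tau_mu comp_reduce[OF mu_naturality'])

lemma kcomp_kident_right: "kc \<cdot> (ide K \<otimes> ki) = \<r> K"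
proof -
  have "kc \<cdot> (ide K \<otimes> ki) = \<Lambda> (K \<odot> I) A MA (ev_A \<cdot> (\<r> K \<otimes> ide A))"
    by (simp add: kcomp_def kident_def curry_comp wmap_def assoc_naturality
        comp_reduce[OF whisker_left_eq[OF app_curry]] comp_reduce[OF ltau_eta]
        comp_reduce[OF eta_naturality'] triangle)
  also have "\<dots> = \<r> K"
    by (rule curry_app) simp_all
  finally show ?thesis .
qed

lemma kcomp_kident_left: "kc \<cdot> (ki \<otimes> ide K) = \<l> K"
proof -
  have "kc \<cdot> (ki \<otimes> ide K) = \<Lambda> (I \<odot> K) A MA (ev_A \<cdot> (\<l> K \<otimes> ide A))"
    by (simp add: kcomp_def kident_def curry_comp wmap_def assoc_naturality
        comp_reduce[OF interchange_slide[of "\<Lambda> I A MA (\<eta> A \<cdot> \<l> A)"]]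
        comp_reduce[OF ltau_naturality_ide] comp_reduce[OF Mm_comp_eq[OF app_curry]]
        comp_reduce[OF ltau_lunit] comp_reduce[OF lunit_naturality] lunit_tensor)
  also have "\<dots> = \<l> K"
    by (rule curry_app) simp_all
  finally show ?thesis .
qed

lemma kcomp_comp: "g \<in> Arr \<Longrightarrow> trg g = K \<odot> K \<Longrightarrow> kc \<cdot> g = \<Lambda> (src g) A MA (w \<cdot> (g \<otimes> ide A))"
  unfolding kcomp_def by (simp add: curry_comp)

abbreviation "triple_comp \<equiv>
  ev_ext \<cdot> (ide K \<otimes> ev_ext) \<cdot> \<alpha> K K MA \<cdot> (ide (K \<odot> K) \<otimes> ev_A) \<cdot> \<alpha> (K \<odot> K) K A"

lemma kcomp_assoc_left: "kc \<cdot> (kc \<otimes> ide K) = \<Lambda> ((K \<odot> K) \<odot> K) A MA triple_comp"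
  by (simp add: kcomp_comp wmap_def assoc_naturality comp_reduce[OF interchange_slide[of kc]]
      comp_reduce[OF ltau_naturality_ide] comp_reduce[OF Mm_comp_eq[OF app_kcomp]]
      comp_reduce[OF ltau_assoc] comp_reduce[OF ltau_naturality'[of "ide K" ev_A]]
      comp_reduce[OF mu_assoc] comp_reduce[OF mu_naturality] ltau_mu_comp)

lemma kcomp_assoc_right: "kc \<cdot> (ide K \<otimes> kc) \<cdot> \<alpha> K K K = \<Lambda> ((K \<odot> K) \<odot> K) A MA triple_comp"
  by (simp add: kcomp_comp wmap_def comp_reduce[OF assoc_naturality]
      comp_reduce[OF whisker_left_eq[OF app_kcomp]]
      comp_reduce[OF assoc_naturality'[of "ide K" "ide K" ev_A K K "K \<odot> A"]] pentagon[symmetric])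

lemma kcomp_assoc: "kc \<cdot> (kc \<otimes> ide K) = kc \<cdot> (ide K \<otimes> kc) \<cdot> \<alpha> K K K"
  using kcomp_assoc_left kcomp_assoc_right by simp

\<comment> \<open>The only place where commutativity of \<open>M\<close> is used.\<close>
lemma kcomp_linear_left: "a_K \<cdot> MF kc \<cdot> \<tau> K K = kc \<cdot> (a_K \<otimes> ide K)"
proof -
  let ?f = "\<mu> A \<cdot> MF ev_A \<cdot> \<mu> (K \<odot> A) \<cdot> MF (\<tau>' K A) \<cdot> \<tau> K MA \<cdot> (ide (MO K) \<otimes> ev_A) \<cdot> \<alpha> (MO K) K A"
  have "a_K \<cdot> MF kc \<cdot> \<tau> K K = \<Lambda> (MO K \<odot> K) A MA ?f"
    by (simp add: curry_comp qmap_def wmap_def comp_reduce[OF tau_naturality]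
        comp_reduce[OF Mm_comp_eq[OF app_kcomp]] tau_assoc[symmetric]
        comp_reduce[OF tau_naturality_ide'] comp_reduce[OF mu_assoc] comp_reduce[OF mu_naturality])
  moreover have "kc \<cdot> (a_K \<otimes> ide K) = \<Lambda> (MO K \<odot> K) A MA ?f"
    by (simp add: kcomp_comp qmap_def wmap_def assoc_naturality
        comp_reduce[OF interchange_slide[of "\<Lambda> (MO K) A MA (\<mu> A \<cdot> MF ev_A \<cdot> \<tau> K A)"]]
        comp_reduce[OF ltau_naturality_ide] comp_reduce[OF Mm_comp_eq[OF app_curry]]
        comp_reduce[OF mu_assoc] comp_reduce[OF mu_naturality] comp_reduce3[OF tau_commute])
  ultimately show ?thesis by simp
qed

lemma kcomp_linear_right: "a_K \<cdot> MF kc \<cdot> \<tau>' K K = kc \<cdot> (ide K \<otimes> a_K)"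
proof -
  let ?f = "\<mu> A \<cdot> MF ev_A \<cdot> \<tau>' K A \<cdot> (ide K \<otimes> \<mu> A) \<cdot> (ide K \<otimes> MF ev_A) \<cdot> (ide K \<otimes> \<tau> K A) \<cdot>
    \<alpha> K (MO K) A"
  have "a_K \<cdot> MF kc \<cdot> \<tau>' K K = \<Lambda> (K \<odot> MO K) A MA ?f"
    by (simp add: curry_comp qmap_def wmap_def comp_reduce[OF tau_naturality]
        comp_reduce[OF Mm_comp_eq[OF app_kcomp]] tau_ltau_assoc
        comp_reduce[OF ltau_naturality'[of "ide K" ev_A]] comp_reduce[OF mu_assoc]
        comp_reduce[OF mu_naturality] ltau_mu_comp)
  moreover have "kc \<cdot> (ide K \<otimes> a_K) = \<Lambda> (K \<odot> MO K) A MA ?f"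
    by (simp add: kcomp_comp qmap_def wmap_def assoc_naturality
        comp_reduce[OF whisker_left_eq[OF app_curry]])
  ultimately show ?thesis by simp
qed

lemma kcomp_compat: "a_K \<cdot> MF kc \<cdot> \<mu> (K \<odot> K) \<cdot> MF (\<tau>' K K) \<cdot> \<tau> K (MO K) = kc \<cdot> (a_K \<otimes> a_K)"
proof -
  have "kc \<cdot> (a_K \<otimes> a_K) = kc \<cdot> ((a_K \<otimes> ide K) \<cdot> (ide (MO K) \<otimes> a_K))"
    by (simp add: interchange[symmetric])
  also have "\<dots> = a_K \<cdot> MF kc \<cdot> \<mu> (K \<odot> K) \<cdot> MF (\<tau>' K K) \<cdot> \<tau> K (MO K)"
    by (simp add: comp_reduce[OF kcomp_linear_left[symmetric]] tau_naturality_ide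
        comp_reduce[OF Mm_comp_eq[OF kcomp_linear_right[symmetric]]] comp_reduce[OF a_K_mu]
        comp_reduce[OF mu_naturality])
  finally show ?thesis by simp
qed

lemma Kleisli_sym_em_monoid: "sym_em_monoid C M K a_K kc ki"
  unfolding sym_em_monoid_def hom_def
  using a_K_eta a_K_mu kcomp_assoc kcomp_kident_left kcomp_kident_right kcomp_compat by simp

lemma Ls_sym_em_monoid_hom: "sym_em_monoid_hom C M MA (\<mu> A) m u K a_K kc ki Ls"
  unfolding sym_em_monoid_hom_def hom_def
  using sym_em_monoid Kleisli_sym_em_monoid Ls_algebra_hom Ls_mult Ls_unit by simp

lemma Ls_split_mono: "\<exists>r \<in> hom C K MA. r \<cdot> Ls = ide MA"
proof
  show "(ev_ext \<cdot> (ide K \<otimes> u) \<cdot> \<r>' K) \<cdot> Ls = ide MA"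
    by (simp add: runit_inv_naturality comp_reduce[OF interchange_slide[of Ls]]
        comp_reduce[OF ltau_naturality_ide] comp_reduce[OF Mm_comp_eq[OF app_curry]]
        comp_reduce4[OF ext_s_eq_mult] comp_reduce[OF mult_unit_right])
  show "ev_ext \<cdot> (ide K \<otimes> u) \<cdot> \<r>' K \<in> hom C K MA"
    by (simp add: hom_def)
qed

end

theorem theorem22:
  fixes C :: "('o, 'm) smcc" and M :: "('o, 'm) smonad"
    and A :: 'o and m u :: 'm
  assumes "symmetric_closed_monoidal C"
    and "commutative_monad C M"
    and "A \<in> Ob C"
    and "sym_em_monoid C M (Mo M A) (mu M A) m u"
  shows "sym_em_monoid_hom C M (Mo M A) (mu M A) m u
           (KA C M A) (curr C (Mo M (KA C M A)) A (Mo M A) (qmap C M A)) (kcomp C M A) (kident C M A)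
           (curr C (Mo M A) A (Mo M A) (cmp C m (tar C (idm C (Mo M A)) (eta M A))))
       \<and> (\<exists>r \<in> hom C (KA C M A) (Mo M A).
            cmp C r (curr C (Mo M A) A (Mo M A) (cmp C m (tar C (idm C (Mo M A)) (eta M A))))
              = idm C (Mo M A))"
proof -
  interpret sym_em_monoid_on_free_algebra C M A m u
    by unfold_locales (use assms in auto)
  show ?thesis using Ls_sym_em_monoid_hom Ls_split_mono by blast
qed

end
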